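(* Let $n=3N^3$ for an integer $N\ge1$, let $\mathcal{A}\in\mathbb{C}^{n\times n}$, $\mathcal{B}\in\mathbb{C}^{N^3\times n}$, let $M_0\in\mathbb{R}^{n\times n}$ be diagonal with positive diagonal entries, and let $\gamma>0$. Assume $\mathcal{B}\mathcal{A}=0$, and let $\mathcal{H}:=\ker\mathcal{A}'\cap\ker\mathcal{B}$; assume $\dim\mathcal{H}$ is either $0$ or bounded independently of $N$. Let the eigenvalues of the Hermitian positive semidefinite matrix $\mathcal{A}M_0\mathcal{A}'$ be $N_0^{\mathcal{A}}$ zeros followed by the positive eigenvalues $\lambda^{\mathcal{A}}_1\le\cdots\le\lambda^{\mathcal{A}}_{N_1^{\mathcal{A}}}$, and let the eigenvalues of $\mathcal{B}'\mathcal{B}$ be $N_0^{\mathcal{B}}$ zeros followed by the positive eigenvalues $\lambda^{\mathcal{B}}_1\le\cdots\le\lambda^{\mathcal{B}}_{N_1^{\mathcal{B}}}$ (all counted with multiplicity). Then the eigenvalues of $\mathcal{A}M_0\mathcal{A}'+\gamma\mathcal{B}'\mathcal{B}$, listed in nondecreasing order, are $$\underbrace{0,\dots,0}_{\dim\mathcal{H}\text{ zeros}}<\lambda_1\le\lambda_2\le\cdots\le\lambda_m\le\cdots,$$ and $$\{\lambda_1,\dots,\lambda_m,\dots\}=\{\lambda^{\mathcal{A}}_1,\dots,\lambda^{\mathcal{A}}_{N_1^{\mathcal{A}}}\}\cup\{\gamma\lambda^{\mathcal{B}}_1,\dots,\gamma\lambda^{\mathcal{B}}_{N_1^{\mathc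al{B}}}\}.$$
   Context: For a complex matrix $X$, $X'$ denotes its conjugate transpose; $\ker X$ is its null space. *)

theory Defs
  imports "Jordan_Normal_Form.Jordan_Normal_Form" "Jordan_Normal_Form.Schur_Decomposition" "Jordan_Normal_Form.Matrix_Kernel"
    "HOL-Library.Multiset"
begin

definition eigvals :: "complex mat \<Rightarrow> complex multiset" where
  "eigvals C = proots (char_poly C)"

definition pos_eigvals :: "complex mat \<Rightarrow> complex multiset" where
  "pos_eigvals C = filter_mset (\<lambda>z. z \<in> \<real> \<and> 0 < Re z) (eigvals C)"

definition subspace_dim :: "nat \<Rightarrow> complex vec set \<Rightarrow> nat" where
  "subspace_dim n W = vectorspace.dim class_ring ((module_vec TYPE(complex) n)\<lparr>carrier := W\<rparr>)"

end

theory Submission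
  imports Defs "Jordan_Normal_Form.Jordan_Normal_Form_Existence"
    "Jordan_Normal_Form.Jordan_Normal_Form_Uniqueness"
begin

(* Put P = A M0 A' and G = gamma B'B. Both are Hermitian and positive semidefinite, being of
   the form X D X' with D diagonal and positive definite (D = M0, resp. gamma I), and BA = 0
   gives PG = 0. Hence (xI - P)(xI - G) = x (xI - (P + G)), i.e. char_poly P * char_poly G =
   x^n * char_poly (P + G): the nonzero eigenvalues of P + G are those of P together with those
   of G, and these are the positive ones. Since P + G is Hermitian, its eigenvalue 0 is
   semisimple, so its multiplicity is dim ker (P + G); and as P + G is a sum of two positive
   semidefinite forms, ker (P + G) = ker A' \<inter> ker B. *)

lemma complex_pos_iff: "0 < z \<longleftrightarrow> z \<in> \<real> \<and> 0 < Re z"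
  by (auto simp: less_complex_def complex_is_Real_iff)

lemma complex_pos_mult_iff:
  fixes b z :: complex
  assumes "0 < b"
  shows "0 \<le> b * z \<longleftrightarrow> 0 \<le> z" and "0 < b * z \<longleftrightarrow> 0 < z"
  using assms by (auto simp: less_eq_complex_def less_complex_def zero_le_mult_iff zero_less_mult_iff)

lemma mult_mat_vec_zero [simp]: "A \<in> carrier_mat nr nc \<Longrightarrow> A *\<^sub>v 0\<^sub>v nc = 0\<^sub>v nr"
  by (intro eq_vecI) (auto simp: scalar_prod_def)

lemma mat_adjoint_carrier_mat [simp]:
  "mat_adjoint A \<in> carrier_mat nc nr \<longleftrightarrow> A \<in> carrier_mat nr nc"
  unfolding mat_adjoint_def carrier_mat_def by auto

lemma dim_mat_adjoint [simp]:
  "dim_row (mat_adjoint A) = dim_col A"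
  "dim_col (mat_adjoint A) = dim_row A"
  unfolding mat_adjoint_def by auto

lemma index_mat_adjoint [simp]:
  "i < dim_col A \<Longrightarrow> j < dim_row A \<Longrightarrow> mat_adjoint A $$ (i, j) = conjugate (A $$ (j, i))"
  unfolding mat_adjoint_def by (auto simp: mat_of_rows_index)

lemma mat_adjoint_adjoint [simp]: "mat_adjoint (mat_adjoint A) = A"
  by (rule eq_matI) auto

lemma mat_adjoint_mult:
  assumes "A \<in> carrier_mat nr n" "B \<in> carrier_mat n nc"
  shows "mat_adjoint (A * B) = mat_adjoint B * mat_adjoint A"
  using assms by (intro eq_matI)
    (auto simp: scalar_prod_def sum_conjugate conjugate_dist_mul mult.commute intro!: sum.cong)

lemma mat_adjoint_add:
  assumes "A \<in> carrier_mat nr nc" "B \<in> carrier_mat nr nc"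
  shows "mat_adjoint (A + B) = mat_adjoint A + mat_adjoint B"
  using assms by (intro eq_matI) (auto simp: conjugate_dist_add)

lemma mat_adjoint_diagonal:
  assumes "D \<in> carrier_mat n n" and "diagonal_mat D"
    and "\<And>i. i < n \<Longrightarrow> conjugate (D $$ (i, i)) = D $$ (i, i)"
  shows "mat_adjoint D = D"
  using assms by (intro eq_matI) (auto simp: diagonal_mat_def, metis conjugate_zero)

lemma mat_adjoint_congruence:
  assumes X: "X \<in> carrier_mat n k" and D: "D \<in> carrier_mat k k" and herm: "mat_adjoint D = D"
  shows "mat_adjoint (X * D * mat_adjoint X) = X * D * mat_adjoint X"
proof -
  have XD: "X * D \<in> carrier_mat n k" and Xa: "mat_adjoint X \<in> carrier_mat k n"
    using X D by auto
  have "mat_adjoint (X * D * mat_adjoint X) = X * mat_adjoint (X * D)"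
    using mat_adjoint_mult[OF XD Xa] by simp
  also have "\<dots> = X * D * mat_adjoint X"
    using X D by (simp add: mat_adjoint_mult[OF X D] herm assoc_mult_mat[of _ n k _ k _ n])
  finally show ?thesis .
qed

lemma congruence_mult_gram_eq_0:
  assumes A: "A \<in> carrier_mat n k" and D: "D \<in> carrier_mat k k" and B: "B \<in> carrier_mat m n"
    and BA: "B * A = 0\<^sub>m m k"
  shows "A * D * mat_adjoint A * (mat_adjoint B * B) = 0\<^sub>m n n"
proof -
  have AD: "A * D \<in> carrier_mat n k" and Ad: "mat_adjoint A \<in> carrier_mat k n"
    and Bd: "mat_adjoint B \<in> carrier_mat n m"
    using A D B by auto
  have "mat_adjoint A * mat_adjoint B = mat_adjoint (B * A)"
    by (rule mat_adjoint_mult[OF B A, symmetric])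
  also have "\<dots> = 0\<^sub>m k m" unfolding BA by (rule eq_matI) auto
  finally have "mat_adjoint A * (mat_adjoint B * B) = 0\<^sub>m k n"
    using Ad Bd B by (simp add: assoc_mult_mat[of _ k n _ m _ n, symmetric])
  moreover have "A * D * mat_adjoint A * (mat_adjoint B * B)
      = A * D * (mat_adjoint A * (mat_adjoint B * B))"
    using AD Ad Bd B by (intro assoc_mult_mat[of _ n k _ n _ n]) auto
  ultimately show ?thesis using right_mult_zero_mat[OF AD] by simp
qed

lemma cscalar_prod_mat_adjoint:
  assumes A: "A \<in> carrier_mat nr nc" and u: "u \<in> carrier_vec nc" and v: "v \<in> carrier_vec nr"
  shows "(A *\<^sub>v u) \<bullet>c v = u \<bullet>c (mat_adjoint A *\<^sub>v v)"
proof -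
  have "(A *\<^sub>v u) \<bullet>c v = (\<Sum>i<nr. \<Sum>j<nc. A $$ (i, j) * u $ j * conjugate (v $ i))"
    using A u v by (simp add: scalar_prod_def sum_distrib_right atLeast0LessThan)
  also have "\<dots> = (\<Sum>j<nc. \<Sum>i<nr. A $$ (i, j) * u $ j * conjugate (v $ i))"
    by (rule sum.swap)
  also have "\<dots> = u \<bullet>c (mat_adjoint A *\<^sub>v v)"
    using A u v by (simp add: scalar_prod_def sum_distrib_left atLeast0LessThan sum_conjugate
        conjugate_dist_mul mult_ac)
  finally show ?thesis .
qed

(* The quadratic form of C is (C *v v) \<bullet>c v = v' C v. Over the complex numbers, ordered as in
   HOL-Library.Complex_Order, 0 \<le> z says that z is a nonnegative real. *)
definition psd_mat :: "'a :: conjugatable_ordered_field mat \<Rightarrow> bool" where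
  "psd_mat C \<longleftrightarrow> (\<forall>v \<in> carrier_vec (dim_col C). 0 \<le> (C *\<^sub>v v) \<bullet>c v)"

definition pd_mat :: "'a :: conjugatable_ordered_field mat \<Rightarrow> bool" where
  "pd_mat C \<longleftrightarrow> (\<forall>v \<in> carrier_vec (dim_col C). v \<noteq> 0\<^sub>v (dim_col C) \<longrightarrow> 0 < (C *\<^sub>v v) \<bullet>c v)"

lemma pd_imp_psd_mat: "pd_mat C \<Longrightarrow> psd_mat C"
  unfolding pd_mat_def psd_mat_def
proof (intro ballI)
  fix v :: "'a vec"
  assume pd: "\<forall>v\<in>carrier_vec (dim_col C). v \<noteq> 0\<^sub>v (dim_col C) \<longrightarrow> 0 < (C *\<^sub>v v) \<bullet>c v"
    and v: "v \<in> carrier_vec (dim_col C)"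
  show "0 \<le> (C *\<^sub>v v) \<bullet>c v"
  proof (cases "v = 0\<^sub>v (dim_col C)")
    case True
    then show ?thesis by (simp add: scalar_prod_def)
  next
    case False
    then show ?thesis using pd v by (simp add: less_imp_le)
  qed
qed

lemma pd_mat_diagonal:
  fixes D :: "complex mat"
  assumes D: "D \<in> carrier_mat n n" and diag: "diagonal_mat D"
    and pos: "\<And>i. i < n \<Longrightarrow> 0 < D $$ (i, i)"
  shows "pd_mat D"
  unfolding pd_mat_def
proof (intro ballI impI)
  fix v :: "complex vec"
  assume v: "v \<in> carrier_vec (dim_col D)" and "v \<noteq> 0\<^sub>v (dim_col D)"
  then obtain j where j: "j < n" "v $ j \<noteq> 0" using D by (auto simp: vec_eq_iff)
  have Dv: "(D *\<^sub>v v) $ i = D $$ (i, i) * v $ i" if i: "i < n" for i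
  proof -
    have "(D *\<^sub>v v) $ i = (\<Sum>l\<in>{0..<n}. D $$ (i, l) * v $ l)"
      using D v i by (simp add: scalar_prod_def)
    also have "\<dots> = (\<Sum>l\<in>{0..<n}. if l = i then D $$ (i, i) * v $ i else 0)"
      using diag D i by (intro sum.cong) (auto simp: diagonal_mat_def)
    finally show ?thesis using i by simp
  qed
  have "(D *\<^sub>v v) \<bullet>c v = (\<Sum>i\<in>{0..<n}. D $$ (i, i) * (v $ i * conjugate (v $ i)))"
    unfolding scalar_prod_def using D v
    by (intro sum.cong) (auto simp: Dv mult.assoc simp del: index_mult_mat_vec)
  also have "0 < \<dots>"
  proof (rule sum_pos2)
    show "0 < D $$ (j, j) * (v $ j * conjugate (v $ j))"
      using complex_pos_mult_iff(2)[OF pos[OF j(1)]] conjugate_square_greater_0[of "v $ j"] j(2)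
      by simp
    show "0 \<le> D $$ (i, i) * (v $ i * conjugate (v $ i))" if "i \<in> {0..<n}" for i
      using pos[of i] that by (intro mult_nonneg_nonneg conjugate_square_positive) auto
  qed (use j in auto)
  finally show "0 < (D *\<^sub>v v) \<bullet>c v" .
qed

lemma quadratic_form_congruence:
  assumes X: "X \<in> carrier_mat n k" and D: "D \<in> carrier_mat k k" and v: "v \<in> carrier_vec n"
  shows "((X * D * mat_adjoint X) *\<^sub>v v) \<bullet>c v
    = (D *\<^sub>v (mat_adjoint X *\<^sub>v v)) \<bullet>c (mat_adjoint X *\<^sub>v v)"
proof -
  have Xa: "mat_adjoint X \<in> carrier_mat k n" using X by simp
  have w: "mat_adjoint X *\<^sub>v v \<in> carrier_vec k" using Xa v by simp
  have "(X * D * mat_adjoint X) *\<^sub>v v = X *\<^sub>v (D *\<^sub>v (mat_adjoint X *\<^sub>v v))"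
    using assoc_mult_mat_vec[OF mult_carrier_mat[OF X D] Xa v] assoc_mult_mat_vec[OF X D w] by simp
  then show ?thesis
    using D w v by (simp add: cscalar_prod_mat_adjoint[OF X])
qed

lemma psd_mat_congruence:
  assumes X: "X \<in> carrier_mat n k" and D: "D \<in> carrier_mat k k" and psd: "psd_mat D"
  shows "psd_mat (X * D * mat_adjoint X)"
  unfolding psd_mat_def
proof
  fix v :: "'a vec" assume "v \<in> carrier_vec (dim_col (X * D * mat_adjoint X))"
  then have v: "v \<in> carrier_vec n" using X by simp
  have Xa: "mat_adjoint X \<in> carrier_mat k n" using X by simp
  have "mat_adjoint X *\<^sub>v v \<in> carrier_vec (dim_col D)" using Xa v D by simp
  with psd have "0 \<le> (D *\<^sub>v (mat_adjoint X *\<^sub>v v)) \<bullet>c (mat_adjoint X *\<^sub>v v)"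
    unfolding psd_mat_def by blast
  then show "0 \<le> (X * D * mat_adjoint X *\<^sub>v v) \<bullet>c v"
    unfolding quadratic_form_congruence[OF X D v] .
qed

lemma quadratic_form_congruence_eq_0_iff:
  assumes X: "X \<in> carrier_mat n k" and D: "D \<in> carrier_mat k k" and pd: "pd_mat D"
    and v: "v \<in> carrier_vec n"
  shows "((X * D * mat_adjoint X) *\<^sub>v v) \<bullet>c v = 0 \<longleftrightarrow> mat_adjoint X *\<^sub>v v = 0\<^sub>v k"
proof
  have Xa: "mat_adjoint X \<in> carrier_mat k n" using X by simp
  then have w: "mat_adjoint X *\<^sub>v v \<in> carrier_vec k" using v by simp
  show "mat_adjoint X *\<^sub>v v = 0\<^sub>v k" if "((X * D * mat_adjoint X) *\<^sub>v v) \<bullet>c v = 0"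
    using that pd w D unfolding quadratic_form_congruence[OF X D v] pd_mat_def
    by (metis carrier_matD(2) order.irrefl)
  show "((X * D * mat_adjoint X) *\<^sub>v v) \<bullet>c v = 0" if "mat_adjoint X *\<^sub>v v = 0\<^sub>v k"
    unfolding quadratic_form_congruence[OF X D v] that using D by simp
qed

lemma mat_kernel_add_congruence:
  assumes X: "X \<in> carrier_mat n k" and D: "D \<in> carrier_mat k k" and pdD: "pd_mat D"
    and Y: "Y \<in> carrier_mat n l" and E: "E \<in> carrier_mat l l" and pdE: "pd_mat E"
  shows "mat_kernel (X * D * mat_adjoint X + Y * E * mat_adjoint Y)
    = mat_kernel (mat_adjoint X) \<inter> mat_kernel (mat_adjoint Y)"
proof -
  let ?P = "X * D * mat_adjoint X" and ?Q = "Y * E * mat_adjoint Y"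
  have P: "?P \<in> carrier_mat n n" and Q: "?Q \<in> carrier_mat n n" using X D Y E by auto
  have "?P *\<^sub>v v + ?Q *\<^sub>v v = 0\<^sub>v n \<longleftrightarrow> mat_adjoint X *\<^sub>v v = 0\<^sub>v k \<and> mat_adjoint Y *\<^sub>v v = 0\<^sub>v l"
    if v: "v \<in> carrier_vec n" for v
  proof
    assume sum0: "?P *\<^sub>v v + ?Q *\<^sub>v v = 0\<^sub>v n"
    have "(?P *\<^sub>v v) \<bullet>c v + (?Q *\<^sub>v v) \<bullet>c v = (?P *\<^sub>v v + ?Q *\<^sub>v v) \<bullet>c v"
      by (rule add_scalar_prod_distrib[of _ n, symmetric]) (use P Q v in auto)
    also have "\<dots> = 0" unfolding sum0 using v by simp
    finally have "(?P *\<^sub>v v) \<bullet>c v + (?Q *\<^sub>v v) \<bullet>c v = 0" .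
    moreover have "0 \<le> (?P *\<^sub>v v) \<bullet>c v" and "0 \<le> (?Q *\<^sub>v v) \<bullet>c v"
      using psd_mat_congruence[OF X D pd_imp_psd_mat[OF pdD]]
        psd_mat_congruence[OF Y E pd_imp_psd_mat[OF pdE]] v X Y
      unfolding psd_mat_def by auto
    ultimately have "(?P *\<^sub>v v) \<bullet>c v = 0" and "(?Q *\<^sub>v v) \<bullet>c v = 0"
      by (simp_all add: add_nonneg_eq_0_iff)
    then show "mat_adjoint X *\<^sub>v v = 0\<^sub>v k \<and> mat_adjoint Y *\<^sub>v v = 0\<^sub>v l"
      using quadratic_form_congruence_eq_0_iff[OF X D pdD v]
        quadratic_form_congruence_eq_0_iff[OF Y E pdE v] by simp
  next
    assume "mat_adjoint X *\<^sub>v v = 0\<^sub>v k \<and> mat_adjoint Y *\<^sub>v v = 0\<^sub>v l"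
    then show "?P *\<^sub>v v + ?Q *\<^sub>v v = 0\<^sub>v n"
      using X D Y E v by (simp add: assoc_mult_mat_vec[of _ n k _ n] assoc_mult_mat_vec[of _ n l _ n]
          assoc_mult_mat_vec[of _ n k _ k] assoc_mult_mat_vec[of _ n l _ l])
  qed
  then show ?thesis
    using P Q X Y by (auto simp: mat_kernel[of _ n n] mat_kernel[of _ k n] mat_kernel[of _ l n]
        add_mult_distrib_mat_vec[of _ n n])
qed

lemma char_poly_neq_0: "C \<in> carrier_mat n n \<Longrightarrow> char_poly C \<noteq> 0"
  using degree_monic_char_poly[of C n] by fastforce

lemma count_eigvals:
  "C \<in> carrier_mat n n \<Longrightarrow> count (eigvals C) x = Polynomial.order x (char_poly C)"
  unfolding eigvals_def by (simp add: char_poly_neq_0)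

lemma pos_eigvals_altdef: "pos_eigvals C = filter_mset (\<lambda>z. 0 < z) (eigvals C)"
  unfolding pos_eigvals_def complex_pos_iff ..

lemma psd_mat_eigvals_nonneg:
  assumes C: "C \<in> carrier_mat n n" and psd: "psd_mat C" and z: "z \<in># eigvals C"
  shows "0 \<le> z"
proof -
  have "poly (char_poly C) z = 0"
    using z char_poly_neq_0[OF C] unfolding eigvals_def by simp
  then obtain v where "eigenvector C v z"
    using eigenvalue_root_char_poly[OF C] unfolding eigenvalue_def by blast
  then have v: "v \<in> carrier_vec n" "v \<noteq> 0\<^sub>v n" "C *\<^sub>v v = z \<cdot>\<^sub>v v"
    using C unfolding eigenvector_def by auto
  have "0 \<le> (C *\<^sub>v v) \<bullet>c v" using psd v C unfolding psd_mat_def by auto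
  also have "(C *\<^sub>v v) \<bullet>c v = (v \<bullet>c v) * z" using v by simp
  finally show "0 \<le> z"
    using complex_pos_mult_iff(1)[of "v \<bullet>c v" z] v by simp
qed

lemma pos_eigvals_psd_mat:
  assumes "C \<in> carrier_mat n n" and "psd_mat C"
  shows "pos_eigvals C = filter_mset (\<lambda>z. z \<noteq> 0) (eigvals C)"
  unfolding pos_eigvals_altdef
  using psd_mat_eigvals_nonneg[OF assms] by (intro filter_mset_cong) (auto simp: order_less_le)

lemma count_image_mset_mult:
  fixes k :: "'a :: field"
  assumes "k \<noteq> 0"
  shows "count (image_mset (\<lambda>z. k * z) M) x = count M (x / k)"
proof -
  have "{z. z \<in># M \<and> x = k * z} = {x / k} \<inter> set_mset M"
    using assms by (auto simp: field_simps)
  then show ?thesis by (simp add: count_image_mset' Int_insert_left not_in_iff)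
qed

lemma eigvals_smult:
  assumes C: "C \<in> carrier_mat n n" and k: "k \<noteq> 0"
  shows "eigvals (k \<cdot>\<^sub>m C) = image_mset (\<lambda>z. k * z) (eigvals C)"
proof (rule multiset_eqI)
  fix x
  have kC: "k \<cdot>\<^sub>m C \<in> carrier_mat n n" using C by simp
  have "count (eigvals (k \<cdot>\<^sub>m C)) x = count (eigvals C) (x / k)"
    unfolding count_eigvals[OF kC] count_eigvals[OF C] by (rule order_char_poly_smult[OF C k])
  then show "count (eigvals (k \<cdot>\<^sub>m C)) x = count (image_mset (\<lambda>z. k * z) (eigvals C)) x"
    unfolding count_image_mset_mult[OF k] .
qed

lemma pos_eigvals_smult:
  assumes C: "C \<in> carrier_mat n n" and "0 < r"
  shows "pos_eigvals (complex_of_real r \<cdot>\<^sub>m C)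
    = image_mset (\<lambda>z. complex_of_real r * z) (pos_eigvals C)"
proof -
  have r: "0 < complex_of_real r" using \<open>0 < r\<close> by (simp add: less_complex_def)
  then show ?thesis
    unfolding pos_eigvals_altdef eigvals_smult[OF C r[THEN less_imp_neq, symmetric]]
    by (simp add: filter_mset_image_mset complex_pos_mult_iff(2)[OF r] comp_def)
qed

lemma char_poly_add_of_mult_eq_0:
  fixes P Q :: "'a :: {field, ring_char_0} mat"
  assumes P: "P \<in> carrier_mat n n" and Q: "Q \<in> carrier_mat n n" and PQ: "P * Q = 0\<^sub>m n n"
  shows "char_poly P * char_poly Q = [:0, 1:] ^ n * char_poly (P + Q)"
proof -
  have "poly (char_poly P * char_poly Q) k = poly ([:0, 1:] ^ n * char_poly (P + Q)) k" for k
  proof -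
    define I where "I = k \<cdot>\<^sub>m 1\<^sub>m n"
    have I: "I \<in> carrier_mat n n" unfolding I_def by simp
    have char: "poly (char_poly A) k = det (I - A)" if A: "A \<in> carrier_mat n n" for A
      unfolding char_poly_matrix[OF A] I_def
      by (rule arg_cong[where f = det], rule eq_matI) (use A in \<open>auto simp: char_matrix_def\<close>)
    have IQ: "I - Q \<in> carrier_mat n n" by (rule minus_carrier_mat[OF Q])
    have "(I - P) * (I - Q) = I * (I - Q) - P * (I - Q)"
      by (rule minus_mult_distrib_mat[OF I P IQ])
    also have "I * (I - Q) = k \<cdot>\<^sub>m (I - Q)"
      unfolding I_def by (subst mult_smult_assoc_mat[of _ n n _ n]) (use Q in auto)
    also have "P * (I - Q) = P * I - P * Q" by (rule mult_minus_distrib_mat[OF P I Q])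
    also have "P * I = k \<cdot>\<^sub>m P"
      unfolding I_def using P by (simp add: mult_smult_distrib[OF P one_carrier_mat])
    also have "k \<cdot>\<^sub>m (I - Q) - (k \<cdot>\<^sub>m P - P * Q) = k \<cdot>\<^sub>m (I - (P + Q))"
      unfolding PQ using P Q I by (intro eq_matI) (auto simp: algebra_simps)
    finally have prod: "(I - P) * (I - Q) = k \<cdot>\<^sub>m (I - (P + Q))" .
    have "det (I - P) * det (I - Q) = det ((I - P) * (I - Q))"
      by (rule det_mult[OF minus_carrier_mat[OF P] IQ, symmetric])
    also have "\<dots> = k ^ n * det (I - (P + Q))"
      unfolding prod using P Q by simp
    finally show ?thesis
      using P Q by (simp add: char)
  qed
  then show ?thesis by (simp add: poly_eq_poly_eq_iff[symmetric] fun_eq_iff)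
qed

lemma eigvals_add_of_mult_eq_0:
  assumes P: "P \<in> carrier_mat n n" and Q: "Q \<in> carrier_mat n n" and PQ: "P * Q = 0\<^sub>m n n"
  shows "eigvals P + eigvals Q = replicate_mset n 0 + eigvals (P + Q)"
proof -
  have "proots ([:0, 1:] ^ n :: complex poly) = replicate_mset n 0"
    by (simp add: proots_power repeat_mset_replicate_mset proots_linear_factor[of 0, simplified])
  moreover have "char_poly (P + Q) \<noteq> 0" using P Q by (simp add: char_poly_neq_0[of _ n])
  ultimately show ?thesis
    using arg_cong[OF char_poly_add_of_mult_eq_0[OF P Q PQ], of proots] P Q
    unfolding eigvals_def by (simp add: proots_mult char_poly_neq_0)
qed

lemma mat_kernel_mult_self_adjoint:
  fixes C :: "'a :: conjugatable_ordered_field mat"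
  assumes C: "C \<in> carrier_mat n n" and herm: "mat_adjoint C = C"
  shows "mat_kernel (C * C) = mat_kernel C"
proof -
  have "C *\<^sub>v v = 0\<^sub>v n" if v: "v \<in> carrier_vec n" and CCv: "C *\<^sub>v (C *\<^sub>v v) = 0\<^sub>v n" for v
  proof -
    have Cv: "C *\<^sub>v v \<in> carrier_vec n" using C v by simp
    have "(C *\<^sub>v v) \<bullet>c (C *\<^sub>v v) = (C *\<^sub>v (C *\<^sub>v v)) \<bullet>c v"
      using cscalar_prod_mat_adjoint[OF C Cv v] herm by simp
    also have "\<dots> = 0" unfolding CCv using v by simp
    finally show ?thesis using Cv by simp
  qed
  then show ?thesis
    using C by (auto simp: mat_kernel[of _ n n] assoc_mult_mat_vec[of _ n n _ n])
qed

lemma mat_kernel_pow_mat: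
  assumes C: "C \<in> carrier_mat n n" and idx: "mat_kernel (C * C) = mat_kernel C"
  shows "mat_kernel (C ^\<^sub>m Suc k) = mat_kernel C"
proof (induction k)
  case 0
  show ?case using C by simp
next
  case (Suc k)
  have Ck: "C ^\<^sub>m Suc k \<in> carrier_mat n n" by (rule pow_carrier_mat[OF C])
  have "v \<in> mat_kernel (C ^\<^sub>m Suc (Suc k)) \<longleftrightarrow> v \<in> mat_kernel (C * C)" for v
  proof -
    have "v \<in> mat_kernel (C ^\<^sub>m Suc (Suc k))
        \<longleftrightarrow> v \<in> carrier_vec n \<and> C *\<^sub>v v \<in> mat_kernel (C ^\<^sub>m Suc k)"
      using C Ck by (auto simp: mat_kernel[of _ n n])
    also have "\<dots> \<longleftrightarrow> v \<in> mat_kernel (C * C)"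
      unfolding Suc using C by (auto simp: mat_kernel[of _ n n])
    finally show ?thesis .
  qed
  then show ?case unfolding idx by blast
qed

lemma kernel_dim_eq_subspace_dim: "kernel_dim A = subspace_dim (dim_col A) (mat_kernel A)"
  unfolding kernel_dim_def subspace_dim_def by simp

lemma count_eigvals_0_eq_kernel_dim:
  assumes C: "C \<in> carrier_mat n n" and idx: "mat_kernel (C * C) = mat_kernel C"
  shows "count (eigvals C) 0 = kernel_dim C"
proof -
  obtain as where "char_poly C = (\<Prod>a \<leftarrow> as. [:- a, 1:])"
    using char_poly_factorized[OF C] by blast
  then obtain n_as where jnf: "jordan_nf C n_as" using jordan_nf_exists[OF C] by blast
  have block_le: "m \<le> n" if "(m, a) \<in> set n_as" for m a
  proof -
    from that have "m \<le> Polynomial.order a (char_poly C)"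
      by (rule jordan_nf_block_size_order_bound[OF jnf])
    also have "\<dots> \<le> degree (char_poly C)" by (rule order_degree[OF char_poly_neq_0[OF C]])
    finally show ?thesis using degree_monic_char_poly[OF C] by simp
  qed
  have "count (eigvals C) 0 = sum_list (map fst [(m, e)\<leftarrow>n_as . e = 0])"
    unfolding count_eigvals[OF C] jordan_nf_order[OF jnf] by (simp add: case_prod_unfold)
  also have "\<dots> = (\<Sum>m \<leftarrow> map fst [(m, e)\<leftarrow>n_as . e = 0]. min (Suc n) m)"
    using block_le by (intro arg_cong[where f = sum_list] map_idI[symmetric]) force
  also have "\<dots> = dim_gen_eigenspace C 0 (Suc n)"
    by (rule dim_gen_eigenspace[OF jnf, symmetric])
  also have "\<dots> = kernel_dim C"
  proof -
    have "char_matrix C 0 = C"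
      using C by (intro eq_matI) (auto simp: char_matrix_def)
    then show ?thesis
      unfolding dim_gen_eigenspace_def kernel_dim_eq_subspace_dim
      using mat_kernel_pow_mat[OF C idx] C by simp
  qed
  finally show ?thesis .
qed

lemma eigvals_add_psd_mat:
  assumes P: "P \<in> carrier_mat n n" and G: "G \<in> carrier_mat n n"
    and "psd_mat P" "psd_mat G" and "mat_adjoint P = P" "mat_adjoint G = G"
    and PG: "P * G = 0\<^sub>m n n"
  shows "eigvals (P + G) = replicate_mset (kernel_dim (P + G)) 0 + pos_eigvals P + pos_eigvals G"
proof -
  have PG_carrier: "P + G \<in> carrier_mat n n" using P G by simp
  have "mat_adjoint (P + G) = P + G" using assms by (simp add: mat_adjoint_add[OF P G])
  then have "filter_mset (\<lambda>z. z = 0) (eigvals (P + G)) = replicate_mset (kernel_dim (P + G)) 0"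
    using count_eigvals_0_eq_kernel_dim[OF PG_carrier mat_kernel_mult_self_adjoint[OF PG_carrier]]
    by (simp add: filter_eq_replicate_mset)
  moreover have "filter_mset (\<lambda>z. z \<noteq> 0) (eigvals (P + G)) = pos_eigvals P + pos_eigvals G"
    using arg_cong[OF eigvals_add_of_mult_eq_0[OF P G PG], of "filter_mset (\<lambda>z. z \<noteq> 0)"] assms
    by (simp add: pos_eigvals_psd_mat)
  ultimately show ?thesis
    by (metis multiset_partition add.assoc)
qed

lemma eigvals_congruence_add_gram:
  fixes A B M0 :: "complex mat" and \<gamma> :: real
  assumes A: "A \<in> carrier_mat n n" and B: "B \<in> carrier_mat m n" and M0: "M0 \<in> carrier_mat n n"
    and diag: "diagonal_mat M0" and pos: "\<forall>i < n. M0 $$ (i, i) \<in> \<real> \<and> 0 < Re (M0 $$ (i, i))"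
    and \<gamma>: "\<gamma> > 0" and BA: "B * A = 0\<^sub>m m n"
  shows "eigvals (A * M0 * mat_adjoint A + complex_of_real \<gamma> \<cdot>\<^sub>m (mat_adjoint B * B))
         = replicate_mset (subspace_dim n (mat_kernel (mat_adjoint A) \<inter> mat_kernel B)) 0
           + pos_eigvals (A * M0 * mat_adjoint A)
           + image_mset (\<lambda>z. complex_of_real \<gamma> * z) (pos_eigvals (mat_adjoint B * B))"
proof -
  define c where "c = complex_of_real \<gamma>"
  define E where "E = c \<cdot>\<^sub>m 1\<^sub>m m"
  define P where "P = A * M0 * mat_adjoint A"
  define G where "G = mat_adjoint B * E * mat_adjoint (mat_adjoint B)"
  have Bd: "mat_adjoint B \<in> carrier_mat n m" and E: "E \<in> carrier_mat m m"
    using B unfolding E_def by auto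
  have P: "P \<in> carrier_mat n n" and G: "G \<in> carrier_mat n n"
    using A M0 B Bd E unfolding P_def G_def by auto
  have "0 < c" using \<gamma> unfolding c_def by (simp add: less_complex_def)
  then have pdE: "pd_mat E" and hermE: "mat_adjoint E = E"
    unfolding E_def by (auto intro!: pd_mat_diagonal eq_matI simp: diagonal_mat_def c_def)
  have pdM0: "pd_mat M0" using pd_mat_diagonal[OF M0 diag] pos by (simp add: complex_pos_iff)
  have hermM0: "mat_adjoint M0 = M0"
    using mat_adjoint_diagonal[OF M0 diag] pos by (simp add: Reals_cnj_iff)
  have "mat_adjoint B * E = c \<cdot>\<^sub>m mat_adjoint B"
    unfolding E_def using mult_smult_distrib[OF Bd one_carrier_mat] right_mult_one_mat[OF Bd] by simp
  then have G_smult: "G = c \<cdot>\<^sub>m (mat_adjoint B * B)"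
    unfolding G_def by (simp add: mult_smult_assoc_mat[OF Bd B])
  have "P * G = 0\<^sub>m n n"
    unfolding G_smult P_def using mult_smult_distrib[OF P mult_carrier_mat[OF Bd B]]
      congruence_mult_gram_eq_0[OF A M0 B BA] P_def by simp
  then have "eigvals (P + G) = replicate_mset (kernel_dim (P + G)) 0 + pos_eigvals P + pos_eigvals G"
    using P G psd_mat_congruence[OF A M0 pd_imp_psd_mat[OF pdM0]]
      psd_mat_congruence[OF Bd E pd_imp_psd_mat[OF pdE]]
      mat_adjoint_congruence[OF A M0 hermM0] mat_adjoint_congruence[OF Bd E hermE]
    unfolding P_def G_def by (intro eigvals_add_psd_mat) auto
  moreover have "kernel_dim (P + G) = subspace_dim n (mat_kernel (mat_adjoint A) \<inter> mat_kernel B)"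
    using kernel_dim_eq_subspace_dim mat_kernel_add_congruence[OF A M0 pdM0 Bd E pdE] P B
    unfolding P_def G_def by simp
  moreover have "pos_eigvals G = image_mset (\<lambda>z. c * z) (pos_eigvals (mat_adjoint B * B))"
    unfolding G_smult c_def by (rule pos_eigvals_smult[OF mult_carrier_mat[OF Bd B] \<gamma>])
  ultimately show ?thesis unfolding P_def G_smult c_def by simp
qed

(* Neither N \<ge> 1 nor the particular dimensions 3 N^3 and N^3 play a role. *)
theorem proposition3p2:
  fixes N :: nat and \<A> \<B> M0 :: "complex mat" and \<gamma> :: real
  assumes "N \<ge> 1"
    and "\<A> \<in> carrier_mat (3 * N ^ 3) (3 * N ^ 3)"
    and "\<B> \<in> carrier_mat (N ^ 3) (3 * N ^ 3)"
    and "M0 \<in> carrier_mat (3 * N ^ 3) (3 * N ^ 3)"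
    and "diagonal_mat M0"
    and "\<forall>i < 3 * N ^ 3. M0 $$ (i, i) \<in> \<real> \<and> 0 < Re (M0 $$ (i, i))"
    and "\<gamma> > 0"
    and "\<B> * \<A> = 0\<^sub>m (N ^ 3) (3 * N ^ 3)"
  shows "eigvals (\<A> * M0 * mat_adjoint \<A> + complex_of_real \<gamma> \<cdot>\<^sub>m (mat_adjoint \<B> * \<B>))
         = replicate_mset (subspace_dim (3 * N ^ 3) (mat_kernel (mat_adjoint \<A>) \<inter> mat_kernel \<B>)) 0
           + pos_eigvals (\<A> * M0 * mat_adjoint \<A>)
           + image_mset (\<lambda>z. complex_of_real \<gamma> * z) (pos_eigvals (mat_adjoint \<B> * \<B>))"
  using eigvals_congruence_add_gram[OF assms(2-8)] .

end
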